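(* Let $r,s,N$ be integers with $N\ge 1$, let $F=\{(x,y)\in\mathbb{Z}^2: x\ge r,\ y\le s+N,\ x-y\le r-s\}$ and $D=\{(x,y)\in\mathbb{Z}^2: r-s-N\le x-y\le r-s\}$. Let $t$ be a partial $\mathrm{SL}_2$-tiling defined on $F$ such that $t_{xy}=1$ for all $(x,y)\in F$ with $x-y=r-s$, and $t_{r,s+N}=1$. Then there is a friese defined on $D$ which agrees with $t$ on $F$.
   Context: A partial $\mathrm{SL}_2$-tiling defined on $E\subseteq\mathbb{Z}^2$ is a map $t:E\to\{1,2,3,\dots\}$ such that $t_{xy}t_{x+1,y+1}-t_{x,y+1}t_{x+1,y}=1$ whenever all four points $(x,y),(x,y+1),(x+1,y),(x+1,y+1)$ lie in $E$. For integers $c<c'$, a friese on the diagonal band $D=\{(x,y)\in\mathbb{Z}^2: c\le x-y\le c'\}$ is a partial $\mathrm{SL}_2$-tiling defined on $D$ with $t_{xy}=1$ whenever $x-y=c$ or $x-y=c'$. *)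

theory Defs
  imports Main
begin

definition partial_SL2_tiling :: "(int \<times> int) set \<Rightarrow> (int \<Rightarrow> int \<Rightarrow> int) \<Rightarrow> bool" where
  "partial_SL2_tiling E t \<longleftrightarrow>
     (\<forall>(x, y) \<in> E. t x y \<ge> 1) \<and>
     (\<forall>x y. (x, y) \<in> E \<and> (x, y + 1) \<in> E \<and> (x + 1, y) \<in> E \<and> (x + 1, y + 1) \<in> E \<longrightarrow>
        t x y * t (x + 1) (y + 1) - t x (y + 1) * t (x + 1) y = 1)"

definition diag_band :: "int \<Rightarrow> int \<Rightarrow> (int \<times> int) set" where
  "diag_band c c' = {(x, y). c \<le> x - y \<and> x - y \<le> c'}"

definition friese :: "int \<Rightarrow> int \<Rightarrow> (int \<Rightarrow> int \<Rightarrow> int) \<Rightarrow> bool" where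
  "friese c c' t \<longleftrightarrow> c < c' \<and> partial_SL2_tiling (diag_band c c') t \<and>
     (\<forall>x y. (x - y = c \<or> x - y = c') \<longrightarrow> t x y = 1)"

end

theory Submission
  imports Defs
begin

text \<open>Write the triangle of values of t as T p q for 0 \<le> p < q \<le> N + 1. Unit diagonal and
  the unimodular rule force T p q = det(v p, v q) for the vectors v of the continuant recursion
  v (k + 2) = T k (k + 2) v (k + 1) - v k, by the Pluecker relation and induction on q - p.
  Since the corner T 0 (N + 1) is 1 as well, the antiperiodic extension v (k + N + 2) = - v k
  still has unimodular consecutive pairs, so det(v i, v j) is an SL2-tiling on all of the plane
  that equals 1 on both boundary diagonals of the band; positivity inside the band reduces to
  the positivity of the given triangle.\<close>

definition det2 :: "'a::comm_ring_1 \<times> 'a \<Rightarrow> 'a \<times> 'a \<Rightarrow> 'a" where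
  "det2 v w = fst v * snd w - snd v * fst w"

definition vneg :: "'a::comm_ring_1 \<times> 'a \<Rightarrow> 'a \<times> 'a" where
  "vneg v = (- fst v, - snd v)"

lemma det2_antisym: "det2 w v = - det2 v w"
  by (simp add: det2_def)

lemma det2_vneg_left [simp]: "det2 (vneg v) w = - det2 v w"
  and det2_vneg_right [simp]: "det2 v (vneg w) = - det2 v w"
  by (simp_all add: det2_def vneg_def)

lemma det2_pluecker: "det2 a b * det2 c e - det2 a e * det2 c b = det2 a c * det2 b e"
  by (simp add: det2_def algebra_simps)


fun frieze_vec :: "(nat \<Rightarrow> 'a::comm_ring_1) \<Rightarrow> nat \<Rightarrow> 'a \<times> 'a" where
  "frieze_vec a 0 = (1, 0)"
| "frieze_vec a (Suc 0) = (0, 1)"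
| "frieze_vec a (Suc (Suc k)) =
     (a (Suc k) * fst (frieze_vec a (Suc k)) - fst (frieze_vec a k),
      a (Suc k) * snd (frieze_vec a (Suc k)) - snd (frieze_vec a k))"

lemma det2_frieze_vec_Suc: "det2 (frieze_vec a k) (frieze_vec a (Suc k)) = 1"
  by (induction k) (simp_all add: det2_def algebra_simps)

lemma det2_frieze_vec_Suc_Suc: "det2 (frieze_vec a k) (frieze_vec a (Suc (Suc k))) = a (Suc k)"
  using det2_frieze_vec_Suc[of a k] by (simp add: det2_def algebra_simps)

lemma det2_frieze_vec_triangle:
  fixes T :: "nat \<Rightarrow> nat \<Rightarrow> 'a::idom"
  assumes nonzero: "\<And>p q. p < q \<Longrightarrow> q < l \<Longrightarrow> T p q \<noteq> 0"
    and diag: "\<And>p. p < l \<Longrightarrow> T p (p + 1) = 1"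
    and unimodular: "\<And>p q. p + 1 < q \<Longrightarrow> q < l \<Longrightarrow>
          T p q * T (p + 1) (q + 1) - T p (q + 1) * T (p + 1) q = 1"
    and "p < q" "q \<le> l"
  shows "det2 (frieze_vec (\<lambda>k. T (k - 1) (k + 1)) p) (frieze_vec (\<lambda>k. T (k - 1) (k + 1)) q) = T p q"
  using assms(4,5)
proof (induction "q - p" arbitrary: p q rule: less_induct)
  case less
  let ?a = "\<lambda>k. T (k - 1) (k + 1)"
  let ?v = "frieze_vec ?a"
  consider "q = p + 1" | "q = p + 2" | "p + 2 < q" using less.prems by linarith
  then show ?case
  proof cases
    case 1
    then show ?thesis using diag[of p] det2_frieze_vec_Suc[of ?a p] less.prems by simp
  next
    case 2
    then show ?thesis using det2_frieze_vec_Suc_Suc[of ?a p] by simp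
  next
    case 3
    define q' where "q' = q - 1"
    have q: "q = Suc q'" using 3 unfolding q'_def by simp
    have IH: "det2 (?v i) (?v j) = T i j" if "p \<le> i" "i < j" "j \<le> q" "j - i < q - p" for i j
      using less.hyps that less.prems by simp
    have "det2 (?v p) (?v q') * det2 (?v (p + 1)) (?v q) - det2 (?v p) (?v q) * det2 (?v (p + 1)) (?v q')
          = 1"
      using det2_pluecker[of "?v p" "?v q'" "?v (p + 1)" "?v q"]
        det2_frieze_vec_Suc[of ?a p] det2_frieze_vec_Suc[of ?a q'] q 3 by simp
    also have "1 = T p q' * T (p + 1) q - T p q * T (p + 1) q'"
      using unimodular[of p q'] q 3 less.prems by simp
    finally have "det2 (?v p) (?v q) * T (p + 1) q' = T p q * T (p + 1) q'"
      using IH[of p q'] IH[of "p + 1" q] IH[of "p + 1" q'] q 3 by simp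
    then show ?thesis using nonzero[of "p + 1" q'] q 3 less.prems by simp
  qed
qed


definition antiperiodic_ext :: "int \<Rightarrow> (nat \<Rightarrow> 'a::comm_ring_1 \<times> 'a) \<Rightarrow> int \<Rightarrow> 'a \<times> 'a" where
  "antiperiodic_ext m w k =
     (if even (k div m) then w (nat (k mod m)) else vneg (w (nat (k mod m))))"

lemma antiperiodic_ext_base: "0 \<le> k \<Longrightarrow> k < m \<Longrightarrow> antiperiodic_ext m w k = w (nat k)"
  by (simp add: antiperiodic_ext_def)

lemma antiperiodic_ext_add_mult:
  assumes "m > 0"
  shows "antiperiodic_ext m w (k + c * m) =
           (if even c then antiperiodic_ext m w k else vneg (antiperiodic_ext m w k))"
proof -
  have "(k + c * m) div m = k div m + c" "(k + c * m) mod m = k mod m"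
    using assms by simp_all
  then show ?thesis by (auto simp: antiperiodic_ext_def vneg_def)
qed


lemma friese_det2:
  fixes V :: "int \<Rightarrow> int \<times> int"
  assumes "c < c'"
    and unimodular: "\<And>k. det2 (V k) (V (k + 1)) = 1"
    and boundary: "\<And>k. det2 (V k) (V (k + (c' - c) + 1)) = 1"
    and pos: "\<And>k d. 1 \<le> d \<Longrightarrow> d \<le> c' - c + 1 \<Longrightarrow> det2 (V k) (V (k + d)) \<ge> 1"
  shows "friese c c' (\<lambda>x y. det2 (V (x - c')) (V (y + 1)))"
proof -
  let ?u = "\<lambda>x y. det2 (V (x - c')) (V (y + 1))"
  have "?u x y \<ge> 1" if "(x, y) \<in> diag_band c c'" for x y
  proof -
    have "det2 (V (x - c')) (V ((x - c') + (c' - (x - y) + 1))) \<ge> 1"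
      using that by (intro pos) (auto simp: diag_band_def)
    then show ?thesis by simp
  qed
  moreover have "?u x y * ?u (x + 1) (y + 1) - ?u x (y + 1) * ?u (x + 1) y = 1" for x y
    using det2_pluecker[of "V (x - c')" "V (y + 1)" "V (x - c' + 1)" "V (y + 1 + 1)"]
      unimodular[of "x - c'"] unimodular[of "y + 1"] by (simp add: algebra_simps)
  moreover have "?u x y = 1" if "x - y = c \<or> x - y = c'" for x y
  proof -
    from that consider "y + 1 = (x - c') + (c' - c) + 1" | "y + 1 = (x - c') + 1" by force
    then show ?thesis
    proof cases
      case 1
      show ?thesis unfolding 1 by (rule boundary)
    next
      case 2
      show ?thesis unfolding 2 by (rule unimodular)
    qed
  qed
  ultimately show ?thesis
    using \<open>c < c'\<close> unfolding friese_def partial_SL2_tiling_def by auto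
qed

locale unimodular_triangle =
  fixes T :: "nat \<Rightarrow> nat \<Rightarrow> int" and n :: nat
  assumes pos: "p < q \<Longrightarrow> q \<le> n + 1 \<Longrightarrow> T p q \<ge> 1"
    and diag: "p \<le> n \<Longrightarrow> T p (p + 1) = 1"
    and unimodular: "p + 1 < q \<Longrightarrow> q \<le> n \<Longrightarrow>
          T p q * T (p + 1) (q + 1) - T p (q + 1) * T (p + 1) q = 1"
    and corner: "T 0 (n + 1) = 1"
begin

definition vec :: "int \<Rightarrow> int \<times> int" where
  "vec = antiperiodic_ext (int n + 2) (frieze_vec (\<lambda>k. T (k - 1) (k + 1)))"

lemma det2_vec_triangle:
  assumes "0 \<le> i" "i < j" "j \<le> int n + 1"
  shows "det2 (vec i) (vec j) = T (nat i) (nat j)"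
proof -
  have nonzero: "T p q \<noteq> 0" if "p < q" "q \<le> n + 1" for p q
    using pos[OF that] by simp
  have "det2 (frieze_vec (\<lambda>k. T (k - 1) (k + 1)) (nat i)) (frieze_vec (\<lambda>k. T (k - 1) (k + 1)) (nat j))
        = T (nat i) (nat j)"
    by (rule det2_frieze_vec_triangle[where l = "n + 1"]) (use assms nonzero diag unimodular in auto)
  then show ?thesis using assms by (simp add: vec_def antiperiodic_ext_base)
qed

lemma vec_add_mult: "vec (k + c * (int n + 2)) = (if even c then vec k else vneg (vec k))"
  unfolding vec_def by (rule antiperiodic_ext_add_mult) simp

lemma det2_vec_wrap: "det2 (vec i) (vec (j + (int n + 2))) = det2 (vec j) (vec i)"
  using vec_add_mult[of j 1] by (simp add: det2_antisym[of "vec j" "vec i"])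

lemma det2_vec_add_mod:
  "det2 (vec k) (vec (k + d)) = det2 (vec (k mod (int n + 2))) (vec (k mod (int n + 2) + d))"
proof -
  define i c where "i = k mod (int n + 2)" and "c = k div (int n + 2)"
  have k: "k = i + c * (int n + 2)"
    unfolding i_def c_def by (simp only: mod_div_mult_eq)
  then have kd: "k + d = (i + d) + c * (int n + 2)" by simp
  have "det2 (vec (i + c * (int n + 2))) (vec ((i + d) + c * (int n + 2))) = det2 (vec i) (vec (i + d))"
    by (simp add: vec_add_mult)
  then show ?thesis unfolding i_def[symmetric] by (simp only: k[symmetric] kd[symmetric])
qed

lemma det2_vec_Suc: "det2 (vec k) (vec (k + 1)) = 1"
proof -
  define i where "i = k mod (int n + 2)"
  have i: "0 \<le> i" "i < int n + 2" unfolding i_def by simp_all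
  have "det2 (vec i) (vec (i + 1)) = 1"
  proof (cases "i \<le> int n")
    case True
    then show ?thesis using det2_vec_triangle[of i "i + 1"] diag[of "nat i"] i
      by (simp add: nat_add_distrib)
  next
    case False
    then have i_last: "i = int n + 1" using i by simp
    then have wrap: "i + 1 = 0 + (int n + 2)" by simp
    have "det2 (vec i) (vec (i + 1)) = det2 (vec 0) (vec i)"
      unfolding wrap by (rule det2_vec_wrap)
    also have "\<dots> = T 0 (n + 1)" using det2_vec_triangle[of 0 i] i_last nat_int_add[of n 1] by simp
    finally show ?thesis using corner by simp
  qed
  then show ?thesis using det2_vec_add_mod unfolding i_def by simp
qed

lemma det2_vec_last: "det2 (vec k) (vec (k + int n + 1)) = 1"
proof -
  have shift: "k + int n + 1 = (k - 1) + (int n + 2)" by simp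
  show ?thesis unfolding shift det2_vec_wrap using det2_vec_Suc[of "k - 1"] by simp
qed

lemma det2_vec_pos:
  assumes "1 \<le> d" "d \<le> int n + 1"
  shows "det2 (vec k) (vec (k + d)) \<ge> 1"
proof -
  define i where "i = k mod (int n + 2)"
  have i: "0 \<le> i" "i < int n + 2" unfolding i_def by simp_all
  have "det2 (vec i) (vec (i + d)) \<ge> 1"
  proof (cases "i + d \<le> int n + 1")
    case True
    then show ?thesis using det2_vec_triangle[of i "i + d"] pos[of "nat i" "nat (i + d)"] i assms
      by simp
  next
    case False
    define j where "j = i + d - (int n + 2)"
    have j: "0 \<le> j" "j < i" using False i assms unfolding j_def by simp_all
    have "det2 (vec i) (vec (i + d)) = det2 (vec j) (vec i)"
      using det2_vec_wrap[of i j] unfolding j_def by simp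
    also have "\<dots> = T (nat j) (nat i)" using det2_vec_triangle j i by simp
    also have "\<dots> \<ge> 1" using pos j i by simp
    finally show ?thesis .
  qed
  then show ?thesis using det2_vec_add_mod unfolding i_def by simp
qed

lemma friese_vec:
  assumes "0 < n"
  shows "friese (c - int n) c (\<lambda>x y. det2 (vec (x - c - e)) (vec (y + 1 - e)))"
proof (rule friese_det2)
  show "c - int n < c" using assms by simp
  show "det2 (vec (k - e)) (vec (k + 1 - e)) = 1" for k
    using det2_vec_Suc[of "k - e"] by (simp add: diff_add_eq)
  show "det2 (vec (k - e)) (vec (k + (c - (c - int n)) + 1 - e)) = 1" for k
    using det2_vec_last[of "k - e"] by (simp add: algebra_simps)
  show "1 \<le> det2 (vec (k - e)) (vec (k + d - e))" if "1 \<le> d" "d \<le> c - (c - int n) + 1" for k d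
    using det2_vec_pos[of d "k - e"] that by (simp add: algebra_simps)
qed

end


lemma unimodular_triangle_of_tiling:
  assumes "N = int n"
    and F: "F = {(x, y). x \<ge> r \<and> y \<le> s + N \<and> x - y \<le> r - s}"
    and tiling: "partial_SL2_tiling F t"
    and diagonal: "\<forall>(x, y) \<in> F. x - y = r - s \<longrightarrow> t x y = 1"
    and corner: "t r (s + N) = 1"
  shows "unimodular_triangle (\<lambda>p q. t (r + int p) (s - 1 + int q)) n"
proof -
  have inF: "(r + int p, s - 1 + int q) \<in> F \<longleftrightarrow> p < q \<and> q \<le> n + 1" for p q
    using assms(1) unfolding F by auto
  show ?thesis
  proof
    show "t (r + int p) (s - 1 + int q) \<ge> 1" if "p < q" "q \<le> n + 1" for p q
      using tiling inF[of p q] that unfolding partial_SL2_tiling_def by auto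
    show "t (r + int p) (s - 1 + int (p + 1)) = 1" if "p \<le> n" for p
      using diagonal inF[of p "p + 1"] that by auto
    show "t (r + int p) (s - 1 + int q) * t (r + int (p + 1)) (s - 1 + int (q + 1)) -
          t (r + int p) (s - 1 + int (q + 1)) * t (r + int (p + 1)) (s - 1 + int q) = 1"
      if "p + 1 < q" "q \<le> n" for p q
    proof -
      let ?x = "r + int p" and ?y = "s - 1 + int q"
      have succ: "?x + 1 = r + int (p + 1)" "?y + 1 = s - 1 + int (q + 1)" by simp_all
      have "(?x, ?y) \<in> F" "(?x, ?y + 1) \<in> F" "(?x + 1, ?y) \<in> F" "(?x + 1, ?y + 1) \<in> F"
        unfolding succ inF using that by simp_all
      then have "t ?x ?y * t (?x + 1) (?y + 1) - t ?x (?y + 1) * t (?x + 1) ?y = 1"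
        using tiling unfolding partial_SL2_tiling_def by blast
      then show ?thesis unfolding succ .
    qed
    show "t (r + int 0) (s - 1 + int (n + 1)) = 1"
      using corner assms(1) by simp
  qed
qed

theorem lemma7p1:
  fixes r s N :: int and t :: "int \<Rightarrow> int \<Rightarrow> int"
  assumes "N \<ge> 1"
    and "F = {(x, y). x \<ge> r \<and> y \<le> s + N \<and> x - y \<le> r - s}"
    and "D = {(x, y). r - s - N \<le> x - y \<and> x - y \<le> r - s}"
    and "partial_SL2_tiling F t"
    and "\<forall>(x, y) \<in> F. x - y = r - s \<longrightarrow> t x y = 1"
    and "t r (s + N) = 1"
  shows "\<exists>u. friese (r - s - N) (r - s) u \<and> diag_band (r - s - N) (r - s) = D \<and>
             (\<forall>(x, y) \<in> F. u x y = t x y)"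
proof -
  obtain n where n: "N = int n" using assms(1) zero_le_imp_eq_int by force
  interpret unimodular_triangle "\<lambda>p q. t (r + int p) (s - 1 + int q)" n
    using unimodular_triangle_of_tiling[OF n assms(2,4,5,6)] .
  define u where "u x y = det2 (vec (x - r)) (vec (y + 1 - s))" for x y
  have "friese (r - s - N) (r - s) u"
    using friese_vec[of "r - s" s] assms(1) n unfolding u_def by simp
  moreover have "u x y = t x y" if "(x, y) \<in> F" for x y
  proof -
    have "0 \<le> x - r" "x - r < y + 1 - s" "y + 1 - s \<le> int n + 1"
      using that assms(2) n by auto
    then show ?thesis unfolding u_def by (simp add: det2_vec_triangle)
  qed
  moreover have "diag_band (r - s - N) (r - s) = D"
    using assms(3) unfolding diag_band_def by simp
  ultimately show ?thesis by blast
qed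

end
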